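(* Each $p\in\mathcal P_{\underline b}$ has a unique decomposition $(q_1,\dots,q_b)$.
   Context: $I=[-1,1]$, $\underline b=(\ell_1,\dots,\ell_b)$ a vector of positive even integers. $\mathcal P_{\underline b}$ is the set of polynomials $p:I\to I$ of the form $p=q_b\circ\dots\circ q_1$, where each $q_i:I\to I$ satisfies $q_i(-1)=q_i(1)=-1$, $q_i(0)>0$ for $i\ne b$, and $q_i=A_i^{-1}\circ p_i\circ A_i$ with $p_i(z)=z^{\ell_i}+a_i$ a real polynomial having an invariant interval $J_i$ and $A_i:I\to J_i$ an affine bijection. Such a vector $(q_1,\dots,q_b)$ is called a decomposition of $p$. *)

theory Defs
  imports Complex_Main "HOL-Computational_Algebra.Polynomial"
begin

abbreviation II :: "real set" where "II \<equiv> {-1..1}"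

definition affine_bij_onto :: "(real \<Rightarrow> real) \<Rightarrow> real set \<Rightarrow> bool" where
  "affine_bij_onto A J \<longleftrightarrow>
     (\<exists>\<alpha> \<beta>. \<alpha> \<noteq> 0 \<and> A = (\<lambda>x. \<alpha> * x + \<beta>)) \<and> A ` II = J"

definition unimodal_factor :: "nat \<Rightarrow> real poly \<Rightarrow> bool" where
  "unimodal_factor l q \<longleftrightarrow>
     (\<exists>a c d A. c < d \<and>
        (\<lambda>z. z ^ l + a) ` {c..d} \<subseteq> {c..d} \<and>
        affine_bij_onto A {c..d} \<and>
        (\<forall>x\<in>II. A (poly q x) = (A x) ^ l + a))"

text \<open>Composition q_b o ... o q_1 of a list [q_1,...,q_b], as a function.\<close>
definition comp_list :: "real poly list \<Rightarrow> real \<Rightarrow> real" where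
  "comp_list qs x = foldl (\<lambda>y q. poly q y) x qs"

text \<open>(q_1,...,q_b) is a decomposition of p with respect to bv = (l_1,...,l_b)
  (0-based indices in the list).\<close>
definition decomposition :: "nat list \<Rightarrow> real poly \<Rightarrow> real poly list \<Rightarrow> bool" where
  "decomposition bv p qs \<longleftrightarrow>
     length qs = length bv \<and>
     (\<forall>i < length qs.
        poly (qs ! i) ` II \<subseteq> II \<and>
        poly (qs ! i) (-1) = -1 \<and> poly (qs ! i) 1 = -1 \<and>
        (i \<noteq> length qs - 1 \<longrightarrow> poly (qs ! i) 0 > 0) \<and>
        unimodal_factor (bv ! i) (qs ! i)) \<and>
     (\<forall>x\<in>II. poly p x = comp_list qs x)"

definition Pclass :: "nat list \<Rightarrow> real poly set" where
  "Pclass bv = {p. poly p ` II \<subseteq> II \<and> (\<exists>qs. decomposition bv p qs)}"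

end

theory Submission
  imports Defs
begin

text \<open>
  Since each factor \<open>q\<close> takes the same value at \<open>\<plusminus>1\<close> and \<open>l\<close> is even, the affine
  conjugacy \<open>A\<close> has no translation part, which pins \<open>q\<close> down to the normal form
  \<open>q x = -1 + c (x\<^sup>l - 1)\<close> with \<open>c < 0\<close>. Such a factor attains its maximum \<open>-1 - c\<close>
  exactly at \<open>0\<close>. Uniqueness then follows by peeling off the outermost factor: the inner
  composition \<open>R\<close> has a zero in \<open>I\<close> (by the intermediate value theorem), so the maximum
  of \<open>q \<circ> R\<close> determines \<open>c\<close>, hence \<open>q\<close>; cancelling \<open>q\<close> leaves \<open>R\<^sup>l = S\<^sup>l\<close>, so
  \<open>R = \<plusminus>S\<close> as polynomials, and \<open>R 1 = S 1 \<noteq> 0\<close> fixes the sign.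
\<close>

lemma abs_eq_if_power_eq:
  fixes a b :: "'a::linordered_idom"
  assumes "a ^ n = b ^ n" "0 < n"
  shows "\<bar>a\<bar> = \<bar>b\<bar>"
proof -
  have "\<bar>a\<bar> ^ n = \<bar>b\<bar> ^ n" using assms(1) by (metis power_abs)
  then show ?thesis by (rule power_eq_imp_eq_base) (simp_all add: assms(2))
qed

lemma poly_eq_if_agree_on_infinite:
  fixes p q :: "'a::idom poly"
  assumes "infinite S" "\<forall>x\<in>S. poly p x = poly q x"
  shows "p = q"
proof (rule ccontr)
  assume "p \<noteq> q"
  then have "finite {x. poly (p - q) x = 0}" by (intro poly_roots_finite) simp
  moreover have "S \<subseteq> {x. poly (p - q) x = 0}" using assms(2) by auto
  ultimately show False using assms(1) finite_subset by blast
qed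

lemma infinite_II: "infinite II"
  using infinite_Icc[of "-1::real" 1] by simp

lemma poly_eq_if_power_eq:
  fixes R S :: "real poly"
  assumes "infinite A" "\<forall>x\<in>A. poly R x ^ l = poly S x ^ l" "0 < l"
    and "poly R a = poly S a" "poly R a \<noteq> 0"
  shows "R = S"
proof -
  have "poly R x ^ 2 = poly S x ^ 2" if "x \<in> A" for x
  proof -
    have "\<bar>poly R x\<bar> = \<bar>poly S x\<bar>" using assms(2,3) that abs_eq_if_power_eq by blast
    then show ?thesis by (metis power2_abs)
  qed
  then have "R ^ 2 = S ^ 2"
    by (intro poly_eq_if_agree_on_infinite[OF assms(1)]) simp
  then have "(R + S) * (R - S) = 0"
    by (simp add: square_diff_square_factored[symmetric] power2_eq_square)
  moreover have "R + S \<noteq> 0"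
  proof
    assume "R + S = 0"
    then have "poly R a + poly S a = 0" by (metis poly_0 poly_add)
    then show False using assms(4,5) by simp
  qed
  ultimately show ?thesis by simp
qed

definition pcompose_list :: "real poly list \<Rightarrow> real poly" where
  "pcompose_list qs = foldl (\<lambda>P q. q \<circ>\<^sub>p P) [:0, 1:] qs"

lemma comp_list_Nil [simp]: "comp_list [] x = x"
  by (simp add: comp_list_def)

lemma comp_list_snoc [simp]: "comp_list (qs @ [q]) x = poly q (comp_list qs x)"
  by (simp add: comp_list_def)

lemma comp_list_eq_poly: "comp_list qs x = poly (pcompose_list qs) x"
  by (induction qs rule: rev_induct) (simp_all add: pcompose_list_def poly_pcompose)

lemma comp_list_one:
  assumes "\<forall>q\<in>set qs. poly q 1 = -1 \<and> poly q (-1) = -1"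
  shows "comp_list qs 1 = (if qs = [] then 1 else -1)"
  using assms by (induction qs rule: rev_induct) auto

lemma comp_list_has_zero:
  assumes "\<forall>q\<in>set qs. poly q 1 = -1 \<and> poly q (-1) = -1 \<and> 0 < poly q 0"
  shows "\<exists>x\<in>II. comp_list qs x = 0"
  using assms
proof (induction qs rule: rev_induct)
  case Nil
  then show ?case by force
next
  case (snoc q qs)
  then obtain x0 where x0: "x0 \<in> II" "comp_list qs x0 = 0" by auto
  let ?f = "comp_list (qs @ [q])"
  have "?f 1 = -1" using snoc.prems comp_list_one[of qs] by auto
  moreover have "0 < ?f x0" using snoc.prems x0 by simp
  moreover have "continuous_on {x0..1} ?f"
    unfolding comp_list_eq_poly by (intro continuous_intros)
  ultimately obtain y where "x0 \<le> y" "y \<le> 1" "?f y = 0"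
    using IVT2'[of ?f 1 0 x0] x0 by auto
  then show ?case using x0 by auto
qed

definition normal_factor :: "nat \<Rightarrow> real poly \<Rightarrow> bool" where
  "normal_factor l q \<longleftrightarrow> (\<exists>c<0. \<forall>x. poly q x = -1 + c * (x ^ l - 1))"

lemma normal_factor_endpoints:
  assumes "normal_factor l q" "even l"
  shows "poly q 1 = -1" "poly q (-1) = -1"
  using assms by (auto simp: normal_factor_def)

lemma normal_factor_le_zero_value:
  assumes "normal_factor l q" "even l"
  shows "poly q y \<le> poly q 0"
proof -
  obtain c where c: "c < 0" "\<forall>x. poly q x = -1 + c * (x ^ l - 1)"
    using assms(1) unfolding normal_factor_def by blast
  have "0 ^ l \<le> y ^ l"
    using assms(2) by (cases "l = 0") (simp_all add: zero_le_even_power zero_power)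
  then have "c * y ^ l \<le> c * 0 ^ l"
    using c(1) by (intro mult_left_mono_neg) simp_all
  then show ?thesis using c(2) by (simp add: right_diff_distrib)
qed

lemma normal_factor_eqI:
  assumes "normal_factor l q" "normal_factor l r" "0 < l" "poly q 0 = poly r 0"
  shows "q = r"
proof -
  obtain c d where "\<forall>x. poly q x = -1 + c * (x ^ l - 1)" "\<forall>x. poly r x = -1 + d * (x ^ l - 1)"
    using assms(1,2) unfolding normal_factor_def by blast
  moreover from this have "c = d" using assms(3,4) by (simp add: zero_power)
  ultimately have "poly q = poly r" by auto
  then show ?thesis by (simp add: poly_eq_poly_eq_iff)
qed

lemma normal_factor_power_eq:
  assumes "normal_factor l q" "poly q a = poly q b"
  shows "a ^ l = b ^ l"
  using assms unfolding normal_factor_def by auto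

lemma unimodal_factor_normal_factor:
  assumes l: "even l" "0 < l" and "unimodal_factor l q"
    and q1: "poly q 1 = -1" and qm1: "poly q (-1) = -1" and q0: "-1 \<le> poly q 0"
  shows "normal_factor l q"
proof -
  obtain a \<alpha> \<beta> where "\<alpha> \<noteq> 0"
    and conj: "\<And>x. x \<in> II \<Longrightarrow> \<alpha> * poly q x + \<beta> = (\<alpha> * x + \<beta>) ^ l + a"
    using assms(3) unfolding unimodal_factor_def affine_bij_onto_def by fastforce
  have "(\<alpha> + \<beta>) ^ l = (\<beta> - \<alpha>) ^ l" using conj[of 1] conj[of "-1"] q1 qm1 by simp
  then have "\<bar>\<alpha> + \<beta>\<bar> = \<bar>\<beta> - \<alpha>\<bar>" using l(2) by (rule abs_eq_if_power_eq)
  then have "\<beta> = 0" using \<open>\<alpha> \<noteq> 0\<close> by (auto simp: abs_if split: if_splits)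
  define c where "c = \<alpha> ^ (l - 1)"
  have \<alpha>_power: "\<alpha> ^ l = \<alpha> * c"
    unfolding c_def using l(2) by (simp flip: power_Suc)
  have a: "a = - \<alpha> - \<alpha> ^ l" using conj[of 1] q1 \<open>\<beta> = 0\<close> by simp
  have "poly q x = poly ([:-1 - c:] + monom c l) x" if "x \<in> II" for x
  proof -
    have "\<alpha> * poly q x = \<alpha> * (-1 + c * (x ^ l - 1))"
      using conj[OF that] \<open>\<beta> = 0\<close> by (simp add: a power_mult_distrib \<alpha>_power algebra_simps)
    then have "poly q x = -1 + c * (x ^ l - 1)" using \<open>\<alpha> \<noteq> 0\<close> by simp
    then show ?thesis by (simp add: poly_monom algebra_simps)
  qed
  then have "q = [:-1 - c:] + monom c l"
    by (rule poly_eq_if_agree_on_infinite[OF infinite_II, rule_format])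
  then have form: "\<forall>x. poly q x = -1 + c * (x ^ l - 1)"
    by (simp add: poly_monom algebra_simps)
  moreover have "c \<noteq> 0" using \<open>\<alpha> \<noteq> 0\<close> by (simp add: c_def)
  moreover have "c \<le> 0" using q0 form l(2) by (simp add: zero_power)
  ultimately show ?thesis unfolding normal_factor_def by force
qed

lemma normal_factor_comp_cancel:
  assumes l: "even l" "0 < l" and q: "normal_factor l q" and r: "normal_factor l r"
    and comp: "\<forall>x\<in>II. poly q (poly R x) = poly r (poly S x)"
    and "x0 \<in> II" "poly R x0 = 0" "x1 \<in> II" "poly S x1 = 0"
    and "poly R 1 = poly S 1" "poly R 1 \<noteq> 0"
  shows "q = r" "R = S"
proof -
  have "poly q 0 = poly r (poly S x0)"
    using comp[rule_format, OF \<open>x0 \<in> II\<close>] \<open>poly R x0 = 0\<close> by simp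
  also have "\<dots> \<le> poly r 0" by (rule normal_factor_le_zero_value[OF r l(1)])
  finally have "poly q 0 \<le> poly r 0" .
  have "poly r 0 = poly q (poly R x1)"
    using comp[rule_format, OF \<open>x1 \<in> II\<close>] \<open>poly S x1 = 0\<close> by simp
  also have "\<dots> \<le> poly q 0" by (rule normal_factor_le_zero_value[OF q l(1)])
  finally show "q = r"
    using \<open>poly q 0 \<le> poly r 0\<close> normal_factor_eqI[OF q r l(2)] by simp
  have "poly R x ^ l = poly S x ^ l" if "x \<in> II" for x
    using comp[rule_format, OF that] \<open>q = r\<close> by (intro normal_factor_power_eq[OF q]) simp
  then show "R = S" using poly_eq_if_power_eq[OF infinite_II _ l(2) assms(10,11)] by blast
qed

lemma normal_factors_endpoints:
  assumes "list_all2 normal_factor bv qs" "\<forall>l\<in>set bv. even l"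
  shows "\<forall>q\<in>set qs. poly q 1 = -1 \<and> poly q (-1) = -1"
  using assms normal_factor_endpoints
  by (fastforce simp: list_all2_conv_all_nth in_set_conv_nth)

lemma comp_list_normal_factors_inj:
  assumes "\<forall>l\<in>set bv. 0 < l \<and> even l"
    and "list_all2 normal_factor bv qs" "list_all2 normal_factor bv rs"
    and "\<forall>q\<in>set (butlast qs). 0 < poly q 0" "\<forall>r\<in>set (butlast rs). 0 < poly r 0"
    and "\<forall>x\<in>II. comp_list qs x = comp_list rs x"
  shows "qs = rs"
  using assms
proof (induction bv arbitrary: qs rs rule: rev_induct)
  case Nil
  then show ?case by simp
next
  case (snoc l bv)
  obtain qs' q where qs: "qs = qs' @ [q]" "list_all2 normal_factor bv qs'" "normal_factor l q"
    using snoc.prems(2) by (auto simp: list_all2_append1 list_all2_Cons1)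
  obtain rs' r where rs: "rs = rs' @ [r]" "list_all2 normal_factor bv rs'" "normal_factor l r"
    using snoc.prems(3) by (auto simp: list_all2_append1 list_all2_Cons1)
  have ends: "\<forall>q\<in>set qs'. poly q 1 = -1 \<and> poly q (-1) = -1"
    "\<forall>r\<in>set rs'. poly r 1 = -1 \<and> poly r (-1) = -1"
    using normal_factors_endpoints qs(2) rs(2) snoc.prems(1) by auto
  define R where "R = pcompose_list qs'"
  define S where "S = pcompose_list rs'"
  have comp: "\<forall>x\<in>II. poly q (poly R x) = poly r (poly S x)"
    using snoc.prems(6) qs(1) rs(1) by (simp add: R_def S_def flip: comp_list_eq_poly)
  obtain x0 where "x0 \<in> II" "poly R x0 = 0"
    using comp_list_has_zero[of qs'] ends snoc.prems(4) qs(1) by (auto simp: R_def comp_list_eq_poly)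
  moreover obtain x1 where "x1 \<in> II" "poly S x1 = 0"
    using comp_list_has_zero[of rs'] ends snoc.prems(5) rs(1) by (auto simp: S_def comp_list_eq_poly)
  moreover have "qs' = [] \<longleftrightarrow> rs' = []"
    using list_all2_lengthD[OF qs(2)] list_all2_lengthD[OF rs(2)] by (metis length_0_conv)
  then have "poly R 1 = poly S 1"
    using comp_list_one ends by (simp add: R_def S_def flip: comp_list_eq_poly)
  moreover have "poly R 1 \<noteq> 0"
    using comp_list_one ends by (simp add: R_def flip: comp_list_eq_poly)
  moreover have l: "even l" "0 < l" using snoc.prems(1) by auto
  ultimately have "q = r" "R = S"
    using normal_factor_comp_cancel[OF l qs(3) rs(3) comp] by blast+
  moreover have "\<forall>q\<in>set (butlast qs'). 0 < poly q 0" "\<forall>r\<in>set (butlast rs'). 0 < poly r 0"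
    using snoc.prems(4,5) qs(1) rs(1) by (simp_all add: in_set_butlastD)
  then have "qs' = rs'"
    using snoc.IH[OF _ qs(2) rs(2)] snoc.prems(1) \<open>R = S\<close>
    by (simp add: R_def S_def comp_list_eq_poly)
  ultimately show ?case using qs(1) rs(1) by simp
qed

lemma decomposition_normal_factors:
  assumes "\<forall>l\<in>set bv. 0 < l \<and> even l" "decomposition bv p qs"
  shows "list_all2 normal_factor bv qs" "\<forall>q\<in>set (butlast qs). 0 < poly q 0"
    "\<forall>x\<in>II. comp_list qs x = poly p x"
proof -
  have len: "length qs = length bv"
    and factor: "\<And>i. i < length qs \<Longrightarrow> poly (qs ! i) ` II \<subseteq> II \<and>
      poly (qs ! i) (-1) = -1 \<and> poly (qs ! i) 1 = -1 \<and>
      (i \<noteq> length qs - 1 \<longrightarrow> 0 < poly (qs ! i) 0) \<and> unimodal_factor (bv ! i) (qs ! i)"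
    and comp: "\<forall>x\<in>II. poly p x = comp_list qs x"
    using assms(2) unfolding decomposition_def by blast+
  have "normal_factor (bv ! i) (qs ! i)" if i: "i < length bv" for i
  proof -
    have "bv ! i \<in> set bv" using i by simp
    moreover have "poly (qs ! i) 0 \<in> II" using factor[of i] i len by (auto simp: image_subset_iff)
    ultimately show ?thesis
      using assms(1) factor[of i] i len by (intro unimodal_factor_normal_factor) auto
  qed
  then show "list_all2 normal_factor bv qs"
    using len by (simp add: list_all2_conv_all_nth)
  show "\<forall>q\<in>set (butlast qs). 0 < poly q 0"
  proof
    fix q assume "q \<in> set (butlast qs)"
    then obtain i where "i < length qs - 1" "q = qs ! i"
      by (auto simp: in_set_conv_nth nth_butlast)
    then show "0 < poly q 0" using factor[of i] by simp
  qed
  show "\<forall>x\<in>II. comp_list qs x = poly p x"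
    using comp by simp
qed

theorem lemma4p3:
  fixes bv :: "nat list" and p :: "real poly"
  assumes "\<forall>l \<in> set bv. l > 0 \<and> even l"
    and "p \<in> Pclass bv"
  shows "\<exists>!qs. decomposition bv p qs"
proof -
  obtain qs where qs: "decomposition bv p qs" using assms(2) unfolding Pclass_def by blast
  moreover have "rs = qs" if "decomposition bv p rs" for rs
  proof -
    note rs_normal = decomposition_normal_factors[OF assms(1) that]
    note qs_normal = decomposition_normal_factors[OF assms(1) qs]
    show ?thesis
      using comp_list_normal_factors_inj[OF assms(1) rs_normal(1) qs_normal(1) rs_normal(2) qs_normal(2)]
        rs_normal(3) qs_normal(3) by simp
  qed
  ultimately show ?thesis by blast
qed

end
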